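(* Let $D$ be an open subset of an $n$-dimensional Riemannian manifold, $\{e_1,\dots,e_n\}$ a smooth orthonormal frame on $D$ with dual coframe $\{\theta_i\}$, and $\mathfrak a$ a smooth symmetric Codazzi $(0,2)$-tensor on $D$ with $\mathfrak a(e_i,e_j)=\lambda_i\delta_{ij}$, where $\lambda_1,\dots,\lambda_n$ are pointwise distinct on $D$. Let $X=\sum_i\nabla_{e_i}e_i$, $\Gamma_{ij}^k=\langle\nabla_{e_i}e_j,e_k\rangle$, $\Psi=\sum_{i<j,\,k\neq i,j}(\Gamma_{ii}^k\Gamma_{jj}^k-\Gamma_{ij}^k\Gamma_{ji}^k)$, $\sigma_k=\sigma_k(\lambda_1,\dots,\lambda_n)$, $P(x)=\prod_{i=1}^n(x-\lambda_i)$, and $d\sigma_{n-1}=\sum_k(\sigma_{n-1})_k\theta_k$ (so $\nabla\sigma_{n-1}=\sum_k(\sigma_{n-1})_ke_k$). If $\sigma_k$ is constant on $D$ for every $k\neq n-1$, then (i) $\Gamma_{ii}^k=b_{ik}(\sigma_{n-1})_k$ for $i\neq k$; (ii) $\langle X,\nabla\sigma_{n-1}\rangle=\sum_{k=1}^n u_k(\sigma_{n-1})_k^2$; (iii) $\Psi=\frac12\sum_{k=1}^nG(k)(\sigma_{n-1})_k^2$, where $b_{ik}=\dfrac{(-1)^n\lambda_i}{(\lambda_i-\lambda_k)P'(\lambda_i)}$ for $i\neq k$, $u_k=\sum_{i\neq k}b_{ik}$, and $G(k)=\sum_{i\neq j,\;i,j\neq k}b_{ik}b_{jk}$.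
   Context: $\mathfrak a$ is Codazzi if $(\nabla_X\mathfrak a)(Y,Z)=(\nabla_Y\mathfrak a)(X,Z)$ for all vector fields $X,Y,Z$. $\nabla$ is the Levi-Civita connection. *)

theory Defs
  imports "HOL-Analysis.Analysis" "HOL-Computational_Algebra.Polynomial"
begin

text \<open>Local model: D is an open subset of a coordinate domain in R^n (points real^'n),
  carrying a Riemannian metric g given by its coefficient matrix field g p.
  Vector fields are given by their coordinate components.\<close>

definition dderiv :: "(real^'n \<Rightarrow> real) \<Rightarrow> real^'n \<Rightarrow> real^'n \<Rightarrow> real" where
  "dderiv f p v = frechet_derivative f (at p) v"

definition partial :: "'n \<Rightarrow> (real^'n \<Rightarrow> real) \<Rightarrow> real^'n \<Rightarrow> real" where
  "partial j f p = frechet_derivative f (at p) (axis j 1)"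

text \<open>C-infinity functions on D: differentiable on D with all partial derivatives
  again C-infinity (coinductively, i.e. derivatives of all orders exist).\<close>
coinductive smooth_fun :: "(real^'n) set \<Rightarrow> (real^'n \<Rightarrow> real) \<Rightarrow> bool" for D where
  "f differentiable_on D \<Longrightarrow> (\<And>j. smooth_fun D (partial j f)) \<Longrightarrow> smooth_fun D f"

definition smooth_vf :: "(real^'n) set \<Rightarrow> (real^'n \<Rightarrow> real^'n) \<Rightarrow> bool" where
  "smooth_vf D V \<longleftrightarrow> (\<forall>c. smooth_fun D (\<lambda>p. V p $ c))"

definition smooth_mf :: "(real^'n) set \<Rightarrow> (real^'n \<Rightarrow> real^'n^'n) \<Rightarrow> bool" where
  "smooth_mf D M \<longleftrightarrow> (\<forall>a b. smooth_fun D (\<lambda>p. M p $ a $ b))"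

definition riem_metric :: "(real^'n) set \<Rightarrow> (real^'n \<Rightarrow> real^'n^'n) \<Rightarrow> bool" where
  "riem_metric D g \<longleftrightarrow> open D \<and> smooth_mf D g \<and>
     (\<forall>p\<in>D. transpose (g p) = g p \<and> (\<forall>v. v \<noteq> 0 \<longrightarrow> v \<bullet> (g p *v v) > 0))"

definition tform :: "(real^'n \<Rightarrow> real^'n^'n) \<Rightarrow> real^'n \<Rightarrow> real^'n \<Rightarrow> real^'n \<Rightarrow> real" where
  "tform M p u v = u \<bullet> (M p *v v)"

definition christoffel :: "(real^'n \<Rightarrow> real^'n^'n) \<Rightarrow> 'n \<Rightarrow> 'n \<Rightarrow> 'n \<Rightarrow> real^'n \<Rightarrow> real" where
  "christoffel g c a b p = (1/2) * (\<Sum>d\<in>UNIV. matrix_inv (g p) $ c $ d *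
      (partial a (\<lambda>q. g q $ b $ d) p + partial b (\<lambda>q. g q $ a $ d) p
       - partial d (\<lambda>q. g q $ a $ b) p))"

definition lc_conn :: "(real^'n \<Rightarrow> real^'n^'n) \<Rightarrow> (real^'n \<Rightarrow> real^'n) \<Rightarrow> (real^'n \<Rightarrow> real^'n)
     \<Rightarrow> real^'n \<Rightarrow> real^'n" where
  "lc_conn g X Y p = (\<chi> c. dderiv (\<lambda>q. Y q $ c) p (X p)
       + (\<Sum>a\<in>UNIV. \<Sum>b\<in>UNIV. christoffel g c a b p * X p $ a * Y p $ b))"

definition cov_tensor :: "(real^'n \<Rightarrow> real^'n^'n) \<Rightarrow> (real^'n \<Rightarrow> real^'n^'n)
    \<Rightarrow> (real^'n \<Rightarrow> real^'n) \<Rightarrow> (real^'n \<Rightarrow> real^'n) \<Rightarrow> (real^'n \<Rightarrow> real^'n) \<Rightarrow> real^'n \<Rightarrow> real" where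
  "cov_tensor g A X Y Z p = dderiv (\<lambda>q. tform A q (Y q) (Z q)) p (X p)
      - tform A p (lc_conn g X Y p) (Z p) - tform A p (Y p) (lc_conn g X Z p)"

definition codazzi :: "(real^'n) set \<Rightarrow> (real^'n \<Rightarrow> real^'n^'n) \<Rightarrow> (real^'n \<Rightarrow> real^'n^'n) \<Rightarrow> bool" where
  "codazzi D g A \<longleftrightarrow> (\<forall>X Y Z. smooth_vf D X \<and> smooth_vf D Y \<and> smooth_vf D Z \<longrightarrow>
      (\<forall>p\<in>D. cov_tensor g A X Y Z p = cov_tensor g A Y X Z p))"

definition esym :: "nat \<Rightarrow> nat \<Rightarrow> (nat \<Rightarrow> 'a \<Rightarrow> real) \<Rightarrow> 'a \<Rightarrow> real" where
  "esym n k lam p = (\<Sum>S\<in>{S. S \<subseteq> {1..n} \<and> card S = k}. \<Prod>i\<in>S. lam i p)"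

definition charpoly :: "nat \<Rightarrow> (nat \<Rightarrow> 'a \<Rightarrow> real) \<Rightarrow> 'a \<Rightarrow> real poly" where
  "charpoly n lam p = (\<Prod>i\<in>{1..n}. [:- lam i p, 1:])"

definition bcoef :: "nat \<Rightarrow> (nat \<Rightarrow> 'a \<Rightarrow> real) \<Rightarrow> nat \<Rightarrow> nat \<Rightarrow> 'a \<Rightarrow> real" where
  "bcoef n lam i k p = (-1)^n * lam i p /
      ((lam i p - lam k p) * poly (pderiv (charpoly n lam p)) (lam i p))"

definition ucoef :: "nat \<Rightarrow> (nat \<Rightarrow> 'a \<Rightarrow> real) \<Rightarrow> nat \<Rightarrow> 'a \<Rightarrow> real" where
  "ucoef n lam k p = (\<Sum>i\<in>{1..n} - {k}. bcoef n lam i k p)"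

definition Gcoef :: "nat \<Rightarrow> (nat \<Rightarrow> 'a \<Rightarrow> real) \<Rightarrow> nat \<Rightarrow> 'a \<Rightarrow> real" where
  "Gcoef n lam k p = (\<Sum>(i,j)\<in>{(i,j). i \<in> {1..n} \<and> j \<in> {1..n} \<and> i \<noteq> j \<and> i \<noteq> k \<and> j \<noteq> k}.
       bcoef n lam i k p * bcoef n lam j k p)"

definition Gam :: "(real^'n \<Rightarrow> real^'n^'n) \<Rightarrow> (nat \<Rightarrow> real^'n \<Rightarrow> real^'n) \<Rightarrow> nat \<Rightarrow> nat \<Rightarrow> nat
    \<Rightarrow> real^'n \<Rightarrow> real" where
  "Gam g e i j k p = tform g p (lc_conn g (e i) (e j) p) (e k p)"

end

theory Submission
  imports Defs
begin

(* In the frame, metric compatibility of the Levi-Civita connection gives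
   Gamma_ij^k = - Gamma_ik^j, and the Codazzi equation applied to frame fields gives
   e_k(lam_i) = (lam_i - lam_k) Gamma_ii^k and
   (lam_j - lam_k) Gamma_ij^k = (lam_i - lam_k) Gamma_ji^k for distinct i, j, k.
   Differentiating P(t) = sum_j (-1)^j sigma_j t^(n-j) along e_k and putting t = lam_i,
   only sigma_(n-1) varies, so e_k(lam_i) P'(lam_i) = (-1)^n lam_i e_k(sigma_(n-1)):
   with the first Codazzi identity this is (i), and (ii) follows by summation.
   In Psi the products Gamma_ii^k Gamma_jj^k give the G(k) terms by (i). The cross terms
   cancel: h = (lam_j - lam_k) Gamma_ij^k is symmetric in i, j, k, so
   Gamma_ij^k Gamma_ji^k = h^2 / ((lam_i - lam_k) (lam_j - lam_k)), and summing over the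
   cyclic permutations of (i, j, k) gives h^2 times
   1/((a-c)(b-c)) + 1/((b-a)(c-a)) + 1/((c-b)(a-b)) = 0, where (a, b, c) = (lam_i, lam_j, lam_k). *)

lemma smooth_fun_differentiable_at:
  assumes "smooth_fun D f" "open D" "p \<in> D"
  shows "f differentiable (at p)"
  using assms by (metis smooth_fun.cases differentiable_on_eq_differentiable_at)

lemma has_derivative_imp_dderiv:
  assumes "(f has_derivative f') (at p)"
  shows "dderiv f p v = f' v"
  using frechet_derivative_at[OF assms] unfolding dderiv_def by simp

lemma differentiable_imp_has_dderiv:
  assumes "f differentiable (at p)"
  shows "(f has_derivative dderiv f p) (at p)"
  using assms unfolding dderiv_def by (metis frechet_derivative_works)

lemma dderiv_locally_const:
  assumes "open D" "p \<in> D" "\<forall>q\<in>D. f q = c"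
  shows "dderiv f p v = 0"
proof -
  have "(f has_derivative (\<lambda>_. 0)) (at p)"
    using has_derivative_transform_within_open[OF has_derivative_const assms(1,2)] assms(3)
    by metis
  then show ?thesis by (rule has_derivative_imp_dderiv)
qed

lemma dderiv_eq_sum_partial:
  assumes "f differentiable (at p)"
  shows "dderiv f p v = (\<Sum>c\<in>UNIV. v $ c * partial c f p)"
proof -
  have "linear (frechet_derivative f (at p))"
    using assms frechet_derivative_works has_derivative_linear by blast
  then have "frechet_derivative f (at p) (\<Sum>c\<in>UNIV. v $ c *\<^sub>R axis c 1)
      = (\<Sum>c\<in>UNIV. v $ c * frechet_derivative f (at p) (axis c 1))"
    by (simp add: linear_sum linear_scale)
  moreover have "(\<Sum>c\<in>UNIV. v $ c *\<^sub>R axis c 1) = v"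
    using basis_expansion[of v] by (simp add: scalar_mult_eq_scaleR)
  ultimately show ?thesis unfolding dderiv_def partial_def by simp
qed

definition vf_dderiv :: "(real^'n \<Rightarrow> real^'n) \<Rightarrow> real^'n \<Rightarrow> real^'n \<Rightarrow> real^'n" where
  "vf_dderiv Y p v = (\<chi> c. dderiv (\<lambda>q. Y q $ c) p v)"

lemma tform_add_left: "tform M p (u + v) w = tform M p u w + tform M p v w"
  unfolding tform_def by (simp add: inner_add_left)

lemma tform_sum_left: "tform M p (\<Sum>i\<in>S. f i) w = (\<Sum>i\<in>S. tform M p (f i) w)"
  unfolding tform_def by (simp add: inner_sum_left)

lemma tform_sum_right: "tform M p w (\<Sum>i\<in>S. f i) = (\<Sum>i\<in>S. tform M p w (f i))"
  unfolding tform_def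
  by (simp add: linear_sum[OF matrix_vector_mul_linear] inner_sum_right)

lemma tform_scaleR_right: "tform M p w (c *\<^sub>R v) = c * tform M p w v"
  unfolding tform_def by (simp add: linear_scale[OF matrix_vector_mul_linear])

lemma tform_commute:
  assumes "transpose (M p) = M p"
  shows "tform M p u v = tform M p v u"
  unfolding tform_def
  by (metis assms dot_lmul_matrix inner_commute vector_transpose_matrix)

lemma tform_eq_sum: "tform M p u w = (\<Sum>a\<in>UNIV. \<Sum>b\<in>UNIV. u $ a * M p $ a $ b * w $ b)"
  unfolding tform_def inner_vec_def matrix_vector_mult_def
  by (simp add: sum_distrib_left mult.assoc)

lemma has_derivative_tform:
  assumes Y: "\<And>a. (\<lambda>q. Y q $ a) differentiable (at p)"
    and Z: "\<And>a. (\<lambda>q. Z q $ a) differentiable (at p)"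
    and M: "\<And>a b. (\<lambda>q. M q $ a $ b) differentiable (at p)"
  shows "((\<lambda>q. tform M q (Y q) (Z q)) has_derivative
     (\<lambda>v. tform M p (vf_dderiv Y p v) (Z p)
        + (\<Sum>a\<in>UNIV. \<Sum>b\<in>UNIV. Y p $ a * dderiv (\<lambda>q. M q $ a $ b) p v * Z p $ b)
        + tform M p (Y p) (vf_dderiv Z p v))) (at p)"
proof -
  have "((\<lambda>q. \<Sum>a\<in>UNIV. \<Sum>b\<in>UNIV. Y q $ a * M q $ a $ b * Z q $ b) has_derivative
     (\<lambda>v. \<Sum>a\<in>UNIV. \<Sum>b\<in>UNIV.
        Y p $ a * M p $ a $ b * dderiv (\<lambda>q. Z q $ b) p v +
        (Y p $ a * dderiv (\<lambda>q. M q $ a $ b) p v + dderiv (\<lambda>q. Y q $ a) p v * M p $ a $ b)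
          * Z p $ b)) (at p)"
    by (intro has_derivative_sum has_derivative_mult differentiable_imp_has_dderiv Y Z M)
  then show ?thesis
    unfolding tform_eq_sum[abs_def]
    by (rule has_derivative_eq_rhs) (simp add: fun_eq_iff vf_dderiv_def algebra_simps sum.distrib)
qed

section \<open>Compatibility of the Levi-Civita connection with the metric\<close>

lemma sum_rotate3:
  "(\<Sum>a\<in>A. \<Sum>b\<in>B. \<Sum>c\<in>C. f a b c) = (\<Sum>c\<in>C. \<Sum>a\<in>A. \<Sum>b\<in>B. f a b c)"
proof -
  have "(\<Sum>a\<in>A. \<Sum>b\<in>B. \<Sum>c\<in>C. f a b c) = (\<Sum>a\<in>A. \<Sum>c\<in>C. \<Sum>b\<in>B. f a b c)"
    by (intro sum.cong refl sum.swap)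
  also have "\<dots> = (\<Sum>c\<in>C. \<Sum>a\<in>A. \<Sum>b\<in>B. f a b c)"
    by (rule sum.swap)
  finally show ?thesis .
qed

lemma riem_metric_mult_matrix_inv:
  assumes "riem_metric D g" "p \<in> D"
  shows "g p ** matrix_inv (g p) = mat 1"
proof -
  have "x = 0" if "g p *v x = 0" for x
    using assms that unfolding riem_metric_def by (metis inner_zero_right order_less_irrefl)
  then have "invertible (g p)"
    using invertible_left_inverse matrix_left_invertible_ker by blast
  then have "g p ** matrix_inv (g p) = mat 1 \<and> matrix_inv (g p) ** g p = mat 1"
    unfolding invertible_def matrix_inv_def by (rule someI_ex)
  then show ?thesis ..
qed

definition christoffel_first :: "(real^'n \<Rightarrow> real^'n^'n) \<Rightarrow> 'n \<Rightarrow> 'n \<Rightarrow> 'n \<Rightarrow> real^'n \<Rightarrow> real"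
  where "christoffel_first g a b d p = (1/2) * (partial a (\<lambda>q. g q $ b $ d) p
      + partial b (\<lambda>q. g q $ a $ d) p - partial d (\<lambda>q. g q $ a $ b) p)"

lemma christoffel_lower_index:
  assumes "g p ** matrix_inv (g p) = mat 1"
  shows "(\<Sum>c\<in>UNIV. g p $ d $ c * christoffel g c a b p) = christoffel_first g a b d p"
proof -
  have "(\<Sum>c\<in>UNIV. g p $ d $ c * christoffel g c a b p)
      = (\<Sum>c\<in>UNIV. \<Sum>d'\<in>UNIV. g p $ d $ c * matrix_inv (g p) $ c $ d' * christoffel_first g a b d' p)"
    unfolding christoffel_def christoffel_first_def
    by (simp add: sum_distrib_left algebra_simps)
  also have "\<dots> = (\<Sum>d'\<in>UNIV. (g p ** matrix_inv (g p)) $ d $ d' * christoffel_first g a b d' p)"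
    by (subst sum.swap) (simp add: matrix_matrix_mult_def sum_distrib_right)
  also have "\<dots> = (\<Sum>d'\<in>UNIV. if d = d' then christoffel_first g a b d' p else 0)"
    using assms by (intro sum.cong) (simp_all add: mat_def)
  also have "\<dots> = christoffel_first g a b d p"
    by simp
  finally show ?thesis .
qed

lemma matrix_vector_mult_christoffel:
  assumes "g p ** matrix_inv (g p) = mat 1"
  shows "g p *v (\<chi> c. \<Sum>a\<in>UNIV. \<Sum>b\<in>UNIV. christoffel g c a b p * x $ a * y $ b)
    = (\<chi> d. \<Sum>a\<in>UNIV. \<Sum>b\<in>UNIV. christoffel_first g a b d p * x $ a * y $ b)"
proof -
  have "(\<Sum>c\<in>UNIV. g p $ d $ c * (\<Sum>a\<in>UNIV. \<Sum>b\<in>UNIV. christoffel g c a b p * x $ a * y $ b))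
      = (\<Sum>a\<in>UNIV. \<Sum>b\<in>UNIV. (\<Sum>c\<in>UNIV. g p $ d $ c * christoffel g c a b p) * x $ a * y $ b)"
    for d
  proof -
    have "(\<Sum>c\<in>UNIV. g p $ d $ c * (\<Sum>a\<in>UNIV. \<Sum>b\<in>UNIV. christoffel g c a b p * x $ a * y $ b))
      = (\<Sum>c\<in>UNIV. \<Sum>a\<in>UNIV. \<Sum>b\<in>UNIV. g p $ d $ c * christoffel g c a b p * x $ a * y $ b)"
      by (simp add: sum_distrib_left mult.assoc)
    also have "\<dots> = (\<Sum>a\<in>UNIV. \<Sum>b\<in>UNIV. \<Sum>c\<in>UNIV. g p $ d $ c * christoffel g c a b p * x $ a * y $ b)"
      by (rule sum_rotate3[symmetric])
    finally show ?thesis by (simp add: sum_distrib_right)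
  qed
  then show ?thesis
    using christoffel_lower_index[of g p, OF assms] by (simp add: matrix_vector_mult_def vec_eq_iff)
qed

lemma tform_lc_conn_left:
  assumes inv: "g p ** matrix_inv (g p) = mat 1" and sym: "transpose (g p) = g p"
  shows "tform g p (lc_conn g X Y p) w = tform g p (vf_dderiv Y p (X p)) w
    + (\<Sum>d\<in>UNIV. \<Sum>a\<in>UNIV. \<Sum>b\<in>UNIV. christoffel_first g a b d p * X p $ a * Y p $ b * w $ d)"
proof -
  define \<Gamma> where "\<Gamma> = (\<chi> c. \<Sum>a\<in>UNIV. \<Sum>b\<in>UNIV. christoffel g c a b p * X p $ a * Y p $ b)"
  have "lc_conn g X Y p = vf_dderiv Y p (X p) + \<Gamma>"
    unfolding lc_conn_def vf_dderiv_def \<Gamma>_def by (simp add: vec_eq_iff mult.assoc)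
  moreover have "tform g p \<Gamma> w = w \<bullet> (g p *v \<Gamma>)"
    using tform_commute[of g p, OF sym] unfolding tform_def by metis
  moreover have "w \<bullet> (g p *v \<Gamma>)
      = (\<Sum>d\<in>UNIV. \<Sum>a\<in>UNIV. \<Sum>b\<in>UNIV. christoffel_first g a b d p * X p $ a * Y p $ b * w $ d)"
    unfolding \<Gamma>_def matrix_vector_mult_christoffel[of g p, OF inv]
    by (simp add: inner_vec_def sum_distrib_left algebra_simps)
  ultimately show ?thesis
    by (simp add: tform_add_left)
qed

lemma riem_metric_entry_differentiable:
  assumes "riem_metric D g" "p \<in> D"
  shows "(\<lambda>q. g q $ a $ b) differentiable (at p)"
  using assms smooth_fun_differentiable_at unfolding riem_metric_def smooth_mf_def by blast

lemma riem_metric_entry_commute: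
  assumes "riem_metric D g" "q \<in> D"
  shows "g q $ a $ b = g q $ b $ a"
proof -
  have "transpose (g q) $ b $ a = g q $ b $ a"
    using assms unfolding riem_metric_def by simp
  then show ?thesis by (simp add: transpose_def)
qed

lemma christoffel_first_add_swap:
  assumes "riem_metric D g" "p \<in> D"
  shows "christoffel_first g a b d p + christoffel_first g a d b p = partial a (\<lambda>q. g q $ b $ d) p"
proof -
  have "open D" using assms(1) unfolding riem_metric_def by simp
  then have "partial a (\<lambda>q. g q $ d $ b) p = partial a (\<lambda>q. g q $ b $ d) p"
    unfolding partial_def
    using frechet_derivative_transform_within_open[OF riem_metric_entry_differentiable[OF assms]
        \<open>open D\<close> assms(2)] riem_metric_entry_commute[OF assms(1)]
    by metis
  then show ?thesis unfolding christoffel_first_def by (simp add: field_simps)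
qed

lemma christoffel_first_contract_add_swap:
  fixes x y z :: "real^'n"
  assumes metric: "riem_metric D g" and p: "p \<in> D"
  shows "(\<Sum>d\<in>UNIV. \<Sum>a\<in>UNIV. \<Sum>b\<in>UNIV. christoffel_first g a b d p * x $ a * y $ b * z $ d)
    + (\<Sum>d\<in>UNIV. \<Sum>a\<in>UNIV. \<Sum>b\<in>UNIV. christoffel_first g a b d p * x $ a * z $ b * y $ d)
    = (\<Sum>b\<in>UNIV. \<Sum>d\<in>UNIV. y $ b * dderiv (\<lambda>q. g q $ b $ d) p x * z $ d)"
proof -
  let ?C = "\<lambda>a b d. christoffel_first g a b d p"
  have "(\<Sum>b\<in>UNIV. \<Sum>d\<in>UNIV. y $ b * dderiv (\<lambda>q. g q $ b $ d) p x * z $ d)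
      = (\<Sum>b\<in>UNIV. \<Sum>d\<in>UNIV. \<Sum>a\<in>UNIV. (?C a b d + ?C a d b) * x $ a * y $ b * z $ d)"
    unfolding dderiv_eq_sum_partial[OF riem_metric_entry_differentiable[OF metric p]]
      christoffel_first_add_swap[OF metric p, symmetric]
    by (intro sum.cong refl) (simp add: sum_distrib_left sum_distrib_right mult.commute mult.left_commute)
  also have "\<dots> = (\<Sum>b\<in>UNIV. \<Sum>d\<in>UNIV. \<Sum>a\<in>UNIV. ?C a b d * x $ a * y $ b * z $ d)
      + (\<Sum>b\<in>UNIV. \<Sum>d\<in>UNIV. \<Sum>a\<in>UNIV. ?C a d b * x $ a * y $ b * z $ d)"
    by (simp add: distrib_right sum.distrib)
  also have "(\<Sum>b\<in>UNIV. \<Sum>d\<in>UNIV. \<Sum>a\<in>UNIV. ?C a b d * x $ a * y $ b * z $ d)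
      = (\<Sum>d\<in>UNIV. \<Sum>a\<in>UNIV. \<Sum>b\<in>UNIV. ?C a b d * x $ a * y $ b * z $ d)"
    by (rule sum_rotate3[symmetric])
  also have "(\<Sum>b\<in>UNIV. \<Sum>d\<in>UNIV. \<Sum>a\<in>UNIV. ?C a d b * x $ a * y $ b * z $ d)
      = (\<Sum>b\<in>UNIV. \<Sum>a\<in>UNIV. \<Sum>d\<in>UNIV. ?C a d b * x $ a * z $ d * y $ b)"
    by (rule sum.cong[OF refl], subst sum.swap) (simp add: mult_ac)
  finally show ?thesis ..
qed

lemma dderiv_tform_lc_conn:
  assumes metric: "riem_metric D g" and p: "p \<in> D"
    and Y: "\<And>a. (\<lambda>q. Y q $ a) differentiable (at p)"
    and Z: "\<And>a. (\<lambda>q. Z q $ a) differentiable (at p)"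
  shows "dderiv (\<lambda>q. tform g q (Y q) (Z q)) p (X p)
     = tform g p (lc_conn g X Y p) (Z p) + tform g p (Y p) (lc_conn g X Z p)"
proof -
  have inv: "g p ** matrix_inv (g p) = mat 1"
    using riem_metric_mult_matrix_inv[OF metric p] .
  have sym: "transpose (g p) = g p"
    using metric p unfolding riem_metric_def by blast
  show ?thesis
    using has_derivative_imp_dderiv[OF has_derivative_tform[OF Y Z
          riem_metric_entry_differentiable[OF metric p]], where v="X p"]
      tform_lc_conn_left[of g p, OF inv sym, of X Y "Z p"]
      tform_lc_conn_left[of g p, OF inv sym, of X Z "Y p"]
      christoffel_first_contract_add_swap[OF metric p, of "X p" "Y p" "Z p"]
      tform_commute[of g p, OF sym, of "Y p" "lc_conn g X Z p"]
      tform_commute[of g p, OF sym, of "Y p" "vf_dderiv Z p (X p)"]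
    by linarith
qed

lemma orthonormal_frame_span:
  fixes G :: "real^'n^'n" and E :: "nat \<Rightarrow> real^'n"
  assumes orth: "\<forall>i\<in>{1..CARD('n)}. \<forall>j\<in>{1..CARD('n)}. E i \<bullet> (G *v E j) = (if i = j then 1 else 0)"
  shows "span (E ` {1..CARD('n)}) = UNIV"
proof -
  let ?I = "{1..CARD('n)}"
  have inj: "inj_on E ?I"
  proof (rule inj_onI)
    fix i j assume "i \<in> ?I" "j \<in> ?I" "E i = E j"
    then show "i = j" using orth by (metis zero_neq_one)
  qed
  have "independent (E ` ?I)"
  proof
    assume "dependent (E ` ?I)"
    then obtain u where u: "\<exists>v\<in>E ` ?I. u v \<noteq> 0" and s: "(\<Sum>v\<in>E ` ?I. u v *\<^sub>R v) = 0"
      using dependent_finite[of "E ` ?I"] by auto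
    from u obtain k where k: "k \<in> ?I" "u (E k) \<noteq> 0" by auto
    have "0 = (\<Sum>v\<in>E ` ?I. u v *\<^sub>R v) \<bullet> (G *v E k)" using s by simp
    also have "\<dots> = (\<Sum>i\<in>?I. u (E i) * (E i \<bullet> (G *v E k)))"
      using sum.reindex[OF inj, of "\<lambda>v. u v * (v \<bullet> (G *v E k))"]
      by (simp add: inner_sum_left comp_def)
    also have "\<dots> = (\<Sum>i\<in>?I. if i = k then u (E k) else 0)"
      using orth k by (intro sum.cong) auto
    also have "\<dots> = u (E k)" using k by simp
    finally show False using k by simp
  qed
  moreover have "card (E ` ?I) = CARD('n)" using card_image[OF inj] by simp
  ultimately show ?thesis
    using card_ge_dim_independent[of "E ` ?I" UNIV] by auto
qed

lemma diagonal_form_frame_eigenvector: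
  fixes G M :: "real^'n^'n" and E :: "nat \<Rightarrow> real^'n"
  assumes orth: "\<forall>i\<in>{1..CARD('n)}. \<forall>j\<in>{1..CARD('n)}. E i \<bullet> (G *v E j) = (if i = j then 1 else 0)"
    and diag: "\<forall>i\<in>{1..CARD('n)}. \<forall>j\<in>{1..CARD('n)}. E i \<bullet> (M *v E j) = (if i = j then l i else 0)"
    and k: "k \<in> {1..CARD('n)}"
  shows "M *v E k = l k *\<^sub>R (G *v E k)"
proof -
  define u where "u = M *v E k - l k *\<^sub>R (G *v E k)"
  have "orthogonal u v" if "v \<in> E ` {1..CARD('n)}" for v
    using that orth diag k
    by (auto simp: u_def orthogonal_def inner_diff_left inner_commute inner_diff_right)
  then have "orthogonal u u"
    using orthogonal_to_span orthonormal_frame_span[OF orth] by blast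
  then show ?thesis unfolding u_def orthogonal_def by simp
qed

section \<open>Elementary symmetric functions and the characteristic polynomial\<close>

lemma sum_mult_prod_diff_remove:
  fixes x f :: "nat \<Rightarrow> real"
  assumes "finite I" "l \<in> I"
  shows "(\<Sum>i\<in>I. f i * (\<Prod>j\<in>I - {i}. x l - x j)) = f l * (\<Prod>j\<in>I - {l}. x l - x j)"
proof -
  have "(\<Prod>j\<in>I - {i}. x l - x j) = 0" if "i \<in> I - {l}" for i
    using that assms by (intro prod_zero) auto
  then have "(\<Sum>i\<in>I - {l}. f i * (\<Prod>j\<in>I - {i}. x l - x j)) = 0"
    by (intro sum.neutral) simp
  then show ?thesis
    using assms by (simp add: sum.remove)
qed

lemma prod_diff_eq_sum_esym:
  fixes t :: real and x :: "nat \<Rightarrow> real"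
  shows "(\<Prod>i\<in>{1..n}. t - x i)
    = (\<Sum>j\<in>{0..n}. (-1)^j * t^(n-j) * (\<Sum>S\<in>{S. S \<subseteq> {1..n} \<and> card S = j}. \<Prod>i\<in>S. x i))"
proof -
  let ?I = "{1..n::nat}"
  have "(\<Prod>i\<in>?I. t - x i) = (\<Prod>i\<in>?I. (- x i) + t)" by simp
  also have "\<dots> = (\<Sum>X\<in>Pow ?I. (\<Prod>i\<in>X. - x i) * (\<Prod>i\<in>?I - X. t))"
    by (rule prod_add) simp
  also have "\<dots> = (\<Sum>X\<in>Pow ?I. (-1)^card X * t^(n - card X) * (\<Prod>i\<in>X. x i))"
  proof (rule sum.cong[OF refl])
    fix X assume X: "X \<in> Pow ?I"
    then have "finite X" by (meson PowD finite_atLeastAtMost finite_subset)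
    then show "(\<Prod>i\<in>X. - x i) * (\<Prod>i\<in>?I - X. t) = (-1)^card X * t^(n - card X) * (\<Prod>i\<in>X. x i)"
      using X by (simp add: prod_uminus card_Diff_subset)
  qed
  also have "\<dots> = (\<Sum>j\<in>{0..n}. \<Sum>X\<in>{X. X \<in> Pow ?I \<and> card X = j}.
      (-1)^card X * t^(n - card X) * (\<Prod>i\<in>X. x i))"
  proof (rule sum.group[symmetric])
    show "card ` Pow ?I \<subseteq> {0..n}"
      using card_mono[of ?I] by fastforce
  qed auto
  also have "\<dots> = (\<Sum>j\<in>{0..n}. (-1)^j * t^(n-j) * (\<Sum>S\<in>{S. S \<subseteq> ?I \<and> card S = j}. \<Prod>i\<in>S. x i))"
    by (rule sum.cong[OF refl]) (simp add: sum_distrib_left)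
  finally show ?thesis .
qed

lemma poly_pderiv_charpoly:
  assumes "l \<in> {1..n}"
  shows "poly (pderiv (charpoly n lam p)) (lam l p) = (\<Prod>m\<in>{1..n} - {l}. lam l p - lam m p)"
proof -
  have "pderiv (charpoly n lam p) = (\<Sum>i\<in>{1..n}. \<Prod>j\<in>{1..n} - {i}. [:- lam j p, 1:])"
    unfolding charpoly_def pderiv_prod by (simp add: pderiv_pCons)
  then have "poly (pderiv (charpoly n lam p)) (lam l p)
      = (\<Sum>i\<in>{1..n}. 1 * (\<Prod>j\<in>{1..n} - {i}. lam l p - lam j p))"
    by (simp add: poly_sum poly_prod)
  also have "\<dots> = (\<Prod>m\<in>{1..n} - {l}. lam l p - lam m p)"
    using sum_mult_prod_diff_remove[of "{1..n}" l "\<lambda>_. 1" "\<lambda>i. lam i p"] assms by simp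
  finally show ?thesis .
qed

lemma esym_differentiable:
  fixes lam :: "nat \<Rightarrow> real^'n \<Rightarrow> real"
  assumes "\<forall>i\<in>{1..n}. lam i differentiable (at p)"
  shows "esym n j lam differentiable (at p)"
proof -
  have "((\<lambda>q. \<Prod>i\<in>S. lam i q) has_derivative
      (\<lambda>v. \<Sum>i\<in>S. frechet_derivative (lam i) (at p) v * (\<Prod>j\<in>S - {i}. lam j p))) (at p)"
    if "S \<subseteq> {1..n}" for S
    using assms that
    by (intro has_derivative_prod) (auto intro: frechet_derivative_works[THEN iffD1])
  then have "(\<lambda>q. \<Prod>i\<in>S. lam i q) differentiable (at p)" if "S \<subseteq> {1..n}" for S
    using that by (blast intro: differentiableI)
  then show ?thesis
    unfolding esym_def[abs_def] by (intro differentiable_sum) auto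
qed

lemma esym_0 [simp]: "esym n 0 lam p = 1"
proof -
  have "{S. S \<subseteq> {1..n} \<and> card S = 0} = {{}}"
    by (auto dest: finite_subset[OF _ finite_atLeastAtMost])
  then show ?thesis unfolding esym_def by simp
qed

lemma dderiv_prod_diff_eq_sum_esym:
  fixes lam :: "nat \<Rightarrow> real^'n \<Rightarrow> real"
  assumes ld: "\<forall>i\<in>{1..n}. lam i differentiable (at p)"
  shows "(\<Sum>i\<in>{1..n}. - dderiv (lam i) p v * (\<Prod>j\<in>{1..n} - {i}. t - lam j p))
    = (\<Sum>j\<in>{0..n}. (-1)^j * t^(n-j) * dderiv (esym n j lam) p v)"
proof -
  have "((\<lambda>q. \<Prod>i\<in>{1..n}. t - lam i q) has_derivative
      (\<lambda>v. \<Sum>i\<in>{1..n}. - dderiv (lam i) p v * (\<Prod>j\<in>{1..n} - {i}. t - lam j p))) (at p)"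
    using ld by (intro has_derivative_prod has_derivative_diff[where f'="\<lambda>_. 0", simplified]
        has_derivative_const differentiable_imp_has_dderiv) auto
  moreover have "((\<lambda>q. \<Prod>i\<in>{1..n}. t - lam i q) has_derivative
      (\<lambda>v. \<Sum>j\<in>{0..n}. (-1)^j * t^(n-j) * dderiv (esym n j lam) p v)) (at p)"
    unfolding prod_diff_eq_sum_esym esym_def[symmetric]
    by (intro has_derivative_sum has_derivative_mult_right differentiable_imp_has_dderiv esym_differentiable[OF ld])
  ultimately have "(\<lambda>v. \<Sum>i\<in>{1..n}. - dderiv (lam i) p v * (\<Prod>j\<in>{1..n} - {i}. t - lam j p))
      = (\<lambda>v. \<Sum>j\<in>{0..n}. (-1)^j * t^(n-j) * dderiv (esym n j lam) p v)"
    by (rule has_derivative_unique)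
  then show ?thesis
    by (rule fun_cong)
qed

lemma dderiv_esym_eq_0:
  assumes "open D" "p \<in> D"
    and const: "\<forall>j\<in>{1..n}. j \<noteq> n - 1 \<longrightarrow> (\<exists>c. \<forall>q\<in>D. esym n j lam q = c)"
    and "j \<le> n" "j \<noteq> n - 1"
  shows "dderiv (esym n j lam) p v = 0"
proof (cases "j = 0")
  case True
  then show ?thesis by (simp add: dderiv_locally_const[OF assms(1,2), of _ 1])
next
  case False
  then obtain c where "\<forall>q\<in>D. esym n j lam q = c"
    using const assms(4,5) by fastforce
  then show ?thesis by (rule dderiv_locally_const[OF assms(1,2)])
qed

lemma dderiv_lam_mult_pderiv_charpoly:
  fixes lam :: "nat \<Rightarrow> real^'n \<Rightarrow> real"
  assumes "open D" "p \<in> D"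
    and ld: "\<forall>i\<in>{1..n}. lam i differentiable (at p)"
    and const: "\<forall>j\<in>{1..n}. j \<noteq> n - 1 \<longrightarrow> (\<exists>c. \<forall>q\<in>D. esym n j lam q = c)"
    and l: "l \<in> {1..n}"
  shows "dderiv (lam l) p v * poly (pderiv (charpoly n lam p)) (lam l p)
       = (-1)^n * lam l p * dderiv (esym n (n - 1) lam) p v"
proof -
  have "- dderiv (lam l) p v * poly (pderiv (charpoly n lam p)) (lam l p)
      = (\<Sum>i\<in>{1..n}. - dderiv (lam i) p v * (\<Prod>j\<in>{1..n} - {i}. lam l p - lam j p))"
    using sum_mult_prod_diff_remove[of "{1..n}" l "\<lambda>i. - dderiv (lam i) p v" "\<lambda>i. lam i p"] l
    by (simp add: poly_pderiv_charpoly)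
  also have "\<dots> = (\<Sum>j\<in>{0..n}. (-1)^j * lam l p^(n-j) * dderiv (esym n j lam) p v)"
    by (rule dderiv_prod_diff_eq_sum_esym[OF ld])
  also have "\<dots> = (\<Sum>j\<in>{0..n}.
      if j = n - 1 then (-1)^(n-1) * lam l p * dderiv (esym n (n - 1) lam) p v else 0)"
    using l dderiv_esym_eq_0[OF assms(1,2) const] by (intro sum.cong) auto
  also have "\<dots> = - ((-1)^n * lam l p * dderiv (esym n (n - 1) lam) p v)"
    using l by (cases n) auto
  finally show ?thesis by simp
qed

section \<open>Sums over triples of distinct indices\<close>

definition distinct_triples :: "nat \<Rightarrow> (nat \<times> nat \<times> nat) set" where
  "distinct_triples n =
    {(i,j,k). i \<in> {1..n} \<and> j \<in> {1..n} \<and> k \<in> {1..n} \<and> i \<noteq> j \<and> k \<noteq> i \<and> k \<noteq> j}"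

definition distinct_triples_lt :: "nat \<Rightarrow> (nat \<times> nat \<times> nat) set" where
  "distinct_triples_lt n =
    {(i,j,k). i \<in> {1..n} \<and> j \<in> {1..n} \<and> k \<in> {1..n} \<and> i < j \<and> k \<noteq> i \<and> k \<noteq> j}"

lemma finite_distinct_triples: "finite (distinct_triples n)"
  by (rule finite_subset[of _ "{1..n} \<times> {1..n} \<times> {1..n}"]) (auto simp: distinct_triples_def)

lemma sum_distinct_triples_eq_twice_lt:
  fixes f :: "nat \<Rightarrow> nat \<Rightarrow> nat \<Rightarrow> real"
  assumes sym: "\<And>i j k. (i,j,k) \<in> distinct_triples n \<Longrightarrow> f i j k = f j i k"
  shows "(\<Sum>(i,j,k)\<in>distinct_triples n. f i j k) = 2 * (\<Sum>(i,j,k)\<in>distinct_triples_lt n. f i j k)"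
proof -
  define gt where "gt = {(i,j,k). (j,i,k) \<in> distinct_triples_lt n}"
  have split: "distinct_triples n = distinct_triples_lt n \<union> gt"
    and disj: "distinct_triples_lt n \<inter> gt = {}"
    unfolding gt_def distinct_triples_def distinct_triples_lt_def by auto
  have "(\<Sum>(i,j,k)\<in>gt. f i j k) = (\<Sum>(i,j,k)\<in>distinct_triples_lt n. f i j k)"
    by (rule sum.reindex_bij_witness[where i="\<lambda>(i,j,k). (j,i,k)" and j="\<lambda>(i,j,k). (j,i,k)"])
       (auto simp: gt_def distinct_triples_lt_def distinct_triples_def sym)
  moreover have "finite (distinct_triples_lt n)" "finite gt"
    using finite_distinct_triples[of n] split by (auto intro: finite_subset)
  ultimately show ?thesis
    unfolding split by (simp add: sum.union_disjoint[OF _ _ disj])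
qed

lemma sum_distinct_triples_cyclic_eq_0:
  fixes F :: "nat \<Rightarrow> nat \<Rightarrow> nat \<Rightarrow> real"
  assumes "\<And>i j k. (i,j,k) \<in> distinct_triples n \<Longrightarrow> F i j k + F j k i + F k i j = 0"
  shows "(\<Sum>(i,j,k)\<in>distinct_triples n. F i j k) = 0"
proof -
  let ?S = "\<lambda>F. \<Sum>(i,j,k)\<in>distinct_triples n. F i j k"
  have "?S F = ?S (\<lambda>i j k. F j k i)"
    by (rule sum.reindex_bij_witness[where i="\<lambda>(i,j,k). (j,k,i)" and j="\<lambda>(i,j,k). (k,i,j)"])
       (auto simp: distinct_triples_def)
  moreover have "?S F = ?S (\<lambda>i j k. F k i j)"
    by (rule sum.reindex_bij_witness[where i="\<lambda>(i,j,k). (k,i,j)" and j="\<lambda>(i,j,k). (j,k,i)"])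
       (auto simp: distinct_triples_def)
  moreover have "?S (\<lambda>i j k. F i j k + F j k i + F k i j) = 0"
    using assms by (intro sum.neutral) auto
  ultimately show ?thesis
    by (simp add: sum.distrib split_def)
qed

lemma cyclic_sum_inverse_diff_products:
  fixes a b c :: real
  assumes "a \<noteq> b" "b \<noteq> c" "a \<noteq> c"
  shows "1 / ((a - c) * (b - c)) + 1 / ((b - a) * (c - a)) + 1 / ((c - b) * (a - b)) = 0"
proof -
  define x y where "x = a - b" and "y = b - c"
  have "x \<noteq> 0" "y \<noteq> 0" "x + y \<noteq> 0"
    using assms by (auto simp: x_def y_def)
  moreover have "(a - c) * (b - c) = (x + y) * y" "(b - a) * (c - a) = x * (x + y)"
    "(c - b) * (a - b) = - (y * x)"
    by (simp_all add: x_def y_def algebra_simps)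
  ultimately show ?thesis
    by (simp add: divide_simps)
qed

lemma sum_distinct_triples_symmetric_div_eq_0:
  fixes l :: "nat \<Rightarrow> real" and h :: "nat \<Rightarrow> nat \<Rightarrow> nat \<Rightarrow> real"
  assumes inj: "inj_on l {1..n}"
    and swap12: "\<And>i j k. (i,j,k) \<in> distinct_triples n \<Longrightarrow> h i j k = h j i k"
    and swap23: "\<And>i j k. (i,j,k) \<in> distinct_triples n \<Longrightarrow> h i j k = h i k j"
  shows "(\<Sum>(i,j,k)\<in>distinct_triples n. (h i j k)^2 / ((l i - l k) * (l j - l k))) = 0"
proof (rule sum_distinct_triples_cyclic_eq_0)
  fix i j k assume ijk: "(i,j,k) \<in> distinct_triples n"
  then have "(j,i,k) \<in> distinct_triples n" "(k,i,j) \<in> distinct_triples n"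
    unfolding distinct_triples_def by auto
  then have "h j k i = h i j k" "h k i j = h i j k"
    using ijk swap12 swap23 by metis+
  moreover have "l i \<noteq> l j" "l j \<noteq> l k" "l i \<noteq> l k"
    using ijk inj unfolding distinct_triples_def by (auto dest: inj_onD)
  ultimately show "(h i j k)^2 / ((l i - l k) * (l j - l k)) + (h j k i)^2 / ((l j - l i) * (l k - l i))
      + (h k i j)^2 / ((l k - l j) * (l i - l j)) = 0"
    using cyclic_sum_inverse_diff_products[of "l i" "l j" "l k"]
    by (simp add: add_divide_distrib[symmetric] divide_inverse distrib_left[symmetric])
qed

lemma sum_cross_terms_eq_0:
  fixes l :: "nat \<Rightarrow> real" and G :: "nat \<Rightarrow> nat \<Rightarrow> nat \<Rightarrow> real"
  assumes inj: "inj_on l {1..n}"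
    and codazzi: "\<And>i j k. (i,j,k) \<in> distinct_triples n \<Longrightarrow> (l j - l k) * G i j k = (l i - l k) * G j i k"
    and antisym: "\<And>i j k. (i,j,k) \<in> distinct_triples n \<Longrightarrow> G i j k = - G i k j"
  shows "(\<Sum>(i,j,k)\<in>distinct_triples_lt n. G i j k * G j i k) = 0"
proof -
  define h where "h i j k = (l j - l k) * G i j k" for i j k
  define F where "F i j k = (h i j k)^2 / ((l i - l k) * (l j - l k))" for i j k
  have F_eq: "G i j k * G j i k = F i j k" if ijk: "(i,j,k) \<in> distinct_triples n" for i j k
  proof -
    have "(l i - l k) * (l j - l k) \<noteq> 0"
      using ijk inj unfolding distinct_triples_def by (auto dest: inj_onD)
    moreover have "(h i j k)^2 = h i j k * ((l i - l k) * G j i k)"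
      using codazzi[OF ijk] by (simp add: h_def power2_eq_square)
    then have "(h i j k)^2 = G i j k * G j i k * ((l i - l k) * (l j - l k))"
      by (simp add: h_def algebra_simps)
    ultimately show ?thesis
      by (simp add: F_def eq_divide_eq)
  qed
  have F_sym: "F i j k = F j i k" if "(i,j,k) \<in> distinct_triples n" for i j k
    using codazzi[OF that] by (simp add: F_def h_def mult.commute)
  have "(\<Sum>(i,j,k)\<in>distinct_triples_lt n. G i j k * G j i k)
      = (\<Sum>(i,j,k)\<in>distinct_triples_lt n. F i j k)"
    by (intro sum.cong refl) (auto simp: F_eq distinct_triples_lt_def distinct_triples_def)
  also have "\<dots> = (\<Sum>(i,j,k)\<in>distinct_triples n. F i j k) / 2"
    using sum_distinct_triples_eq_twice_lt[of n F, OF F_sym] by simp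
  also have "\<dots> = 0"
  proof -
    have swap12: "h i j k = h j i k" if "(i,j,k) \<in> distinct_triples n" for i j k
      using codazzi[OF that] by (simp add: h_def)
    have swap23: "h i j k = h i k j" if "(i,j,k) \<in> distinct_triples n" for i j k
      using antisym[OF that] by (simp add: h_def algebra_simps)
    show ?thesis
      using sum_distinct_triples_symmetric_div_eq_0[OF inj swap12 swap23] by (simp add: F_def)
  qed
  finally show ?thesis .
qed

lemma sum_distinct_triples_Gcoef:
  "(\<Sum>(i,j,k)\<in>distinct_triples n. bcoef n lam i k p * bcoef n lam j k p * s k)
    = (\<Sum>k\<in>{1..n}. Gcoef n lam k p * s k)"
proof -
  define P where "P k = {(i,j). i \<in> {1..n} \<and> j \<in> {1..n} \<and> i \<noteq> j \<and> i \<noteq> k \<and> j \<noteq> k}" for k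
  have "finite (P k)" for k
    by (rule finite_subset[of _ "{1..n} \<times> {1..n}"]) (auto simp: P_def)
  have "(\<Sum>k\<in>{1..n}. Gcoef n lam k p * s k)
      = (\<Sum>k\<in>{1..n}. \<Sum>(i,j)\<in>P k. bcoef n lam i k p * bcoef n lam j k p * s k)"
    unfolding Gcoef_def P_def by (simp add: sum_distrib_right split_def)
  also have "\<dots> = (\<Sum>(k,i,j)\<in>Sigma {1..n} P. bcoef n lam i k p * bcoef n lam j k p * s k)"
    using \<open>finite (P _)\<close> by (subst sum.Sigma) (auto simp: split_def)
  also have "\<dots> = (\<Sum>(i,j,k)\<in>distinct_triples n. bcoef n lam i k p * bcoef n lam j k p * s k)"
    by (rule sum.reindex_bij_witness[where i="\<lambda>(i,j,k). (k,i,j)" and j="\<lambda>(k,i,j). (i,j,k)"])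
       (auto simp: distinct_triples_def P_def)
  finally show ?thesis ..
qed

section \<open>A Codazzi tensor diagonalised by an orthonormal frame\<close>

locale codazzi_frame =
  fixes D :: "(real^'n) set"
    and g A :: "real^'n \<Rightarrow> real^'n^'n"
    and e :: "nat \<Rightarrow> real^'n \<Rightarrow> real^'n"
    and lam :: "nat \<Rightarrow> real^'n \<Rightarrow> real"
    and n :: nat
  assumes n_eq: "n = CARD('n)"
    and metric: "riem_metric D g"
    and frame_smooth: "\<forall>i\<in>{1..n}. smooth_vf D (e i)"
    and frame_on: "\<forall>p\<in>D. \<forall>i\<in>{1..n}. \<forall>j\<in>{1..n}.
                     tform g p (e i p) (e j p) = (if i = j then 1 else 0)"
    and A_smooth: "smooth_mf D A"
    and A_sym: "\<forall>p\<in>D. transpose (A p) = A p"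
    and A_codazzi: "codazzi D g A"
    and A_diag: "\<forall>p\<in>D. \<forall>i\<in>{1..n}. \<forall>j\<in>{1..n}.
                     tform A p (e i p) (e j p) = (if i = j then lam i p else 0)"
begin

lemma open_D: "open D"
  using metric unfolding riem_metric_def by simp

lemma g_sym: "p \<in> D \<Longrightarrow> transpose (g p) = g p"
  using metric unfolding riem_metric_def by blast

lemma frame_differentiable: "i \<in> {1..n} \<Longrightarrow> p \<in> D \<Longrightarrow> (\<lambda>q. e i q $ a) differentiable (at p)"
  using frame_smooth open_D smooth_fun_differentiable_at unfolding smooth_vf_def by blast

lemma A_differentiable: "p \<in> D \<Longrightarrow> (\<lambda>q. A q $ a $ b) differentiable (at p)"
  using A_smooth open_D smooth_fun_differentiable_at unfolding smooth_mf_def by blast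

lemma Gam_antisym:
  assumes "p \<in> D" "i \<in> {1..n}" "j \<in> {1..n}" "k \<in> {1..n}"
  shows "Gam g e i j k p = - Gam g e i k j p"
proof -
  have "dderiv (\<lambda>q. tform g q (e j q) (e k q)) p (e i p) = 0"
    using frame_on assms by (intro dderiv_locally_const[OF open_D, of p _ "if j = k then 1 else 0"]) auto
  then show ?thesis
    using dderiv_tform_lc_conn[OF metric assms(1) frame_differentiable frame_differentiable, of j k]
      tform_commute[of g p, OF g_sym] assms
    by (simp add: Gam_def)
qed

lemma Gam_self:
  assumes "p \<in> D" "i \<in> {1..n}" "k \<in> {1..n}"
  shows "Gam g e i k k p = 0"
  using Gam_antisym[OF assms(1,2,3,3)] by simp

lemma A_frame_right:
  assumes "p \<in> D" "k \<in> {1..n}"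
  shows "tform A p w (e k p) = lam k p * tform g p w (e k p)"
proof -
  have "A p *v e k p = lam k p *\<^sub>R (g p *v e k p)"
    using diagonal_form_frame_eigenvector[where G="g p" and M="A p" and E="\<lambda>i. e i p" and l="\<lambda>i. lam i p"]
      frame_on A_diag assms unfolding tform_def n_eq by blast
  then show ?thesis unfolding tform_def by simp
qed

lemma A_frame_left:
  assumes "p \<in> D" "k \<in> {1..n}"
  shows "tform A p (e k p) w = lam k p * tform g p w (e k p)"
proof -
  have "tform A p (e k p) w = tform A p w (e k p)"
    using tform_commute[of A p] A_sym assms(1) by blast
  then show ?thesis using A_frame_right[OF assms] by simp
qed

lemma A_frame_same: "q \<in> D \<Longrightarrow> i \<in> {1..n} \<Longrightarrow> tform A q (e i q) (e i q) = lam i q"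
  using A_diag by simp

lemma dderiv_A_frame_distinct:
  assumes "p \<in> D" "i \<in> {1..n}" "j \<in> {1..n}" "i \<noteq> j"
  shows "dderiv (\<lambda>q. tform A q (e i q) (e j q)) p v = 0"
  using A_diag assms by (intro dderiv_locally_const[OF open_D, of p _ 0]) auto

lemma tform_A_frame_differentiable:
  assumes "p \<in> D" "i \<in> {1..n}"
  shows "(\<lambda>q. tform A q (e i q) (e i q)) differentiable (at p)"
  using has_derivative_tform[OF frame_differentiable frame_differentiable A_differentiable] assms
  by (blast intro: differentiableI)

lemma lam_differentiable:
  assumes "p \<in> D" "i \<in> {1..n}"
  shows "lam i differentiable (at p)"
  using tform_A_frame_differentiable[OF assms] has_derivative_transform_within_open[OF _ open_D assms(1)]
    A_frame_same assms(2) unfolding differentiable_def by blast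

lemma dderiv_lam:
  assumes "p \<in> D" "i \<in> {1..n}"
  shows "dderiv (lam i) p = dderiv (\<lambda>q. tform A q (e i q) (e i q)) p"
  unfolding dderiv_def
  by (rule frechet_derivative_transform_within_open[OF tform_A_frame_differentiable[OF assms]
        open_D assms(1), symmetric]) (rule A_frame_same[OF _ assms(2)])

lemma cov_tensor_frame:
  assumes "p \<in> D" "i \<in> {1..n}" "j \<in> {1..n}" "k \<in> {1..n}"
  shows "cov_tensor g A (e i) (e j) (e k) p = dderiv (\<lambda>q. tform A q (e j q) (e k q)) p (e i p)
    - lam k p * Gam g e i j k p - lam j p * Gam g e i k j p"
  unfolding cov_tensor_def Gam_def A_frame_right[OF assms(1,4)] A_frame_left[OF assms(1,3)] ..

lemma codazzi_frame_diag:
  assumes "p \<in> D" "i \<in> {1..n}" "k \<in> {1..n}" "i \<noteq> k"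
  shows "dderiv (lam i) p (e k p) = (lam i p - lam k p) * Gam g e i i k p"
proof -
  have "cov_tensor g A (e i) (e k) (e i) p = (lam i p - lam k p) * Gam g e i i k p"
    using cov_tensor_frame[OF assms(1,2,3,2)] Gam_antisym[OF assms(1,2,3,2)]
      dderiv_A_frame_distinct[OF assms(1,3,2)] assms(4)
    by (simp add: algebra_simps)
  moreover have "cov_tensor g A (e k) (e i) (e i) p = dderiv (lam i) p (e k p)"
    using cov_tensor_frame[OF assms(1,3,2,2)] Gam_self[OF assms(1,3,2)] dderiv_lam[OF assms(1,2)]
    by simp
  moreover have "cov_tensor g A (e k) (e i) (e i) p = cov_tensor g A (e i) (e k) (e i) p"
    using A_codazzi frame_smooth assms unfolding codazzi_def by blast
  ultimately show ?thesis by simp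
qed

lemma codazzi_frame_offdiag:
  assumes "p \<in> D" "(i,j,k) \<in> distinct_triples n"
  shows "(lam j p - lam k p) * Gam g e i j k p = (lam i p - lam k p) * Gam g e j i k p"
proof -
  have ijk: "i \<in> {1..n}" "j \<in> {1..n}" "k \<in> {1..n}" "i \<noteq> j" "k \<noteq> i" "k \<noteq> j"
    using assms(2) unfolding distinct_triples_def by auto
  have cov: "cov_tensor g A (e a) (e b) (e k) p = (lam b p - lam k p) * Gam g e a b k p"
    if "a \<in> {1..n}" "b \<in> {1..n}" "b \<noteq> k" for a b
    using cov_tensor_frame[OF assms(1) that(1,2) ijk(3)] Gam_antisym[OF assms(1) that(1) ijk(3) that(2)]
      dderiv_A_frame_distinct[OF assms(1) that(2) ijk(3) that(3)] by (simp add: algebra_simps)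
  moreover have "cov_tensor g A (e i) (e j) (e k) p = cov_tensor g A (e j) (e i) (e k) p"
    using A_codazzi frame_smooth assms(1) ijk unfolding codazzi_def by blast
  ultimately show ?thesis
    using cov[OF ijk(1,2)] cov[OF ijk(2,1)] ijk(5,6) by auto
qed

end

locale codazzi_frame_sigma = codazzi_frame +
  assumes distinct: "\<forall>p\<in>D. inj_on (\<lambda>i. lam i p) {1..n}"
    and const: "\<forall>k\<in>{1..n}. k \<noteq> n - 1 \<longrightarrow> (\<exists>c. \<forall>p\<in>D. esym n k lam p = c)"
begin

abbreviation dsigma where
  "dsigma k p \<equiv> dderiv (esym n (n - 1) lam) p (e k p)"

lemma Gam_diag_eq_bcoef:
  assumes p: "p \<in> D" and i: "i \<in> {1..n}" and k: "k \<in> {1..n}" and "i \<noteq> k"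
  shows "Gam g e i i k p = bcoef n lam i k p * dsigma k p"
proof -
  have inj: "inj_on (\<lambda>i. lam i p) {1..n}"
    using distinct p by blast
  then have "poly (pderiv (charpoly n lam p)) (lam i p) \<noteq> 0"
    using i by (auto simp: poly_pderiv_charpoly prod_zero_iff dest: inj_onD)
  moreover have "lam i p - lam k p \<noteq> 0"
    using inj i k \<open>i \<noteq> k\<close> by (auto dest: inj_onD)
  moreover have "dderiv (lam i) p (e k p) * poly (pderiv (charpoly n lam p)) (lam i p)
      = (-1)^n * lam i p * dsigma k p"
    using lam_differentiable[OF p] const i
    by (intro dderiv_lam_mult_pderiv_charpoly[OF open_D p]) auto
  ultimately show ?thesis
    using codazzi_frame_diag[OF p i k \<open>i \<noteq> k\<close>] by (simp add: bcoef_def field_simps)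
qed

lemma tform_sum_lc_conn_grad_sigma:
  assumes p: "p \<in> D"
  shows "tform g p (\<Sum>i\<in>{1..n}. lc_conn g (e i) (e i) p) (\<Sum>k\<in>{1..n}. dsigma k p *\<^sub>R e k p)
    = (\<Sum>k\<in>{1..n}. ucoef n lam k p * (dsigma k p)^2)"
proof -
  have per_k: "dsigma k p * (\<Sum>i\<in>{1..n}. Gam g e i i k p) = ucoef n lam k p * (dsigma k p)^2"
    if k: "k \<in> {1..n}" for k
  proof -
    have "(\<Sum>i\<in>{1..n}. Gam g e i i k p) = Gam g e k k k p + (\<Sum>i\<in>{1..n} - {k}. Gam g e i i k p)"
      using k by (simp add: sum.remove)
    also have "\<dots> = (\<Sum>i\<in>{1..n} - {k}. bcoef n lam i k p * dsigma k p)"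
      using Gam_self[OF p k k] Gam_diag_eq_bcoef[OF p _ k] by (auto intro: sum.cong)
    finally show ?thesis
      unfolding ucoef_def
      by (simp add: sum_distrib_left sum_distrib_right power2_eq_square mult.left_commute)
  qed
  have "tform g p (\<Sum>i\<in>{1..n}. lc_conn g (e i) (e i) p) (\<Sum>k\<in>{1..n}. dsigma k p *\<^sub>R e k p)
      = (\<Sum>k\<in>{1..n}. dsigma k p * (\<Sum>i\<in>{1..n}. Gam g e i i k p))"
    by (simp add: tform_sum_left tform_sum_right tform_scaleR_right Gam_def)
  also have "\<dots> = (\<Sum>k\<in>{1..n}. ucoef n lam k p * (dsigma k p)^2)"
    using per_k by (rule sum.cong[OF refl])
  finally show ?thesis .
qed

lemma sum_Gam_products_eq_Gcoef:
  assumes p: "p \<in> D"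
  shows "(\<Sum>(i,j,k)\<in>distinct_triples_lt n.
      Gam g e i i k p * Gam g e j j k p - Gam g e i j k p * Gam g e j i k p)
    = (1/2) * (\<Sum>k\<in>{1..n}. Gcoef n lam k p * (dsigma k p)^2)"
proof -
  have inj: "inj_on (\<lambda>i. lam i p) {1..n}"
    using distinct p by blast
  have antisym: "Gam g e i j k p = - Gam g e i k j p" if "(i,j,k) \<in> distinct_triples n" for i j k
    using Gam_antisym[OF p] that unfolding distinct_triples_def by blast
  have cross: "(\<Sum>(i,j,k)\<in>distinct_triples_lt n. Gam g e i j k p * Gam g e j i k p) = 0"
    by (rule sum_cross_terms_eq_0[where G="\<lambda>i j k. Gam g e i j k p", OF inj
          codazzi_frame_offdiag[OF p] antisym])
  have "(\<Sum>(i,j,k)\<in>distinct_triples_lt n.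
      Gam g e i i k p * Gam g e j j k p - Gam g e i j k p * Gam g e j i k p)
      = (\<Sum>(i,j,k)\<in>distinct_triples_lt n. Gam g e i i k p * Gam g e j j k p)"
    unfolding split_def sum_subtractf using cross by (simp add: split_def)
  also have "\<dots> = (\<Sum>(i,j,k)\<in>distinct_triples_lt n.
      bcoef n lam i k p * bcoef n lam j k p * (dsigma k p)^2)"
    by (intro sum.cong refl)
       (auto simp: distinct_triples_lt_def Gam_diag_eq_bcoef[OF p] power2_eq_square)
  also have "\<dots> = (1/2) * (\<Sum>(i,j,k)\<in>distinct_triples n.
      bcoef n lam i k p * bcoef n lam j k p * (dsigma k p)^2)"
    by (subst sum_distinct_triples_eq_twice_lt) (simp_all add: mult.commute)
  also have "\<dots> = (1/2) * (\<Sum>k\<in>{1..n}. Gcoef n lam k p * (dsigma k p)^2)"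
    by (subst sum_distinct_triples_Gcoef) (rule refl)
  finally show ?thesis .
qed

end

theorem proposition6p2:
  fixes D :: "(real^'n) set"
    and g A :: "real^'n \<Rightarrow> real^'n^'n"
    and e :: "nat \<Rightarrow> real^'n \<Rightarrow> real^'n"
    and lam :: "nat \<Rightarrow> real^'n \<Rightarrow> real"
    and n :: nat
  defines "n \<equiv> CARD('n)"
  assumes metric: "riem_metric D g"
    and frame_smooth: "\<forall>i\<in>{1..n}. smooth_vf D (e i)"
    and frame_on: "\<forall>p\<in>D. \<forall>i\<in>{1..n}. \<forall>j\<in>{1..n}.
                      tform g p (e i p) (e j p) = (if i = j then 1 else 0)"
    and A_smooth: "smooth_mf D A"
    and A_sym: "\<forall>p\<in>D. transpose (A p) = A p"
    and A_codazzi: "codazzi D g A"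
    and A_diag: "\<forall>p\<in>D. \<forall>i\<in>{1..n}. \<forall>j\<in>{1..n}.
                      tform A p (e i p) (e j p) = (if i = j then lam i p else 0)"
    and distinct: "\<forall>p\<in>D. inj_on (\<lambda>i. lam i p) {1..n}"
    and const: "\<forall>k\<in>{1..n}. k \<noteq> n - 1 \<longrightarrow> (\<exists>c. \<forall>p\<in>D. esym n k lam p = c)"
  shows "\<forall>p\<in>D.
     (\<forall>i\<in>{1..n}. \<forall>k\<in>{1..n}. i \<noteq> k \<longrightarrow>
         Gam g e i i k p = bcoef n lam i k p * dderiv (esym n (n - 1) lam) p (e k p))
   \<and> tform g p (\<Sum>i\<in>{1..n}. lc_conn g (e i) (e i) p)
               (\<Sum>k\<in>{1..n}. dderiv (esym n (n - 1) lam) p (e k p) *\<^sub>R e k p)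
       = (\<Sum>k\<in>{1..n}. ucoef n lam k p * (dderiv (esym n (n - 1) lam) p (e k p))^2)
   \<and> (\<Sum>(i,j,k)\<in>{(i,j,k). i \<in> {1..n} \<and> j \<in> {1..n} \<and> k \<in> {1..n} \<and> i < j \<and> k \<noteq> i \<and> k \<noteq> j}.
         Gam g e i i k p * Gam g e j j k p - Gam g e i j k p * Gam g e j i k p)
       = (1/2) * (\<Sum>k\<in>{1..n}. Gcoef n lam k p * (dderiv (esym n (n - 1) lam) p (e k p))^2)"
proof -
  interpret codazzi_frame_sigma D g A e lam n
    using assms unfolding n_def by unfold_locales auto
  show ?thesis
    using Gam_diag_eq_bcoef tform_sum_lc_conn_grad_sigma sum_Gam_products_eq_Gcoef
    unfolding distinct_triples_lt_def by blast
qed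

end
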